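(* Let $(B,\lfloor\cdot,\cdot\rfloor)$ be an SSD space with quadratic form $q$ and let $A\subset B$ be $q$-positive. Then $\operatorname{conv}A\subset \operatorname{dom}\Phi_A^{@}\subset \operatorname{conv}^w A$.
   Context: An SSD space is a pair $(B,\lfloor\cdot,\cdot\rfloor)$ with $B$ a nonzero real vector space and $\lfloor\cdot,\cdot\rfloor$ a symmetric bilinear form; $q(b)=\frac12\lfloor b,b\rfloor$. $w(B,B)$ is the coarsest topology on $B$ making all maps $b\mapsto\lfloor b,c\rfloor$ continuous, and $\operatorname{conv}^w A$ is the $w(B,B)$-closure of the convex hull $\operatorname{conv}A$. A nonempty $A\subset B$ is $q$-positive if $q(b-c)\ge0$ for all $b,c\in A$. $\Phi_A(x)=\sup_{a\in A}\{\lfloor x,a\rfloor-q(a)\}$; $\Phi_A^{@}(b)=\sup_{c\in B}\{\lfloor c,b\rfloor-\Phi_A(c)\}$; $\operatorname{dom}g=\{x: g(x)<+\infty\}$. *)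

theory Defs
  imports "HOL-Analysis.Analysis"
begin

definition SSD :: "('b::real_vector \<Rightarrow> 'b \<Rightarrow> real) \<Rightarrow> bool" where
  "SSD s \<longleftrightarrow> (\<exists>b::'b. b \<noteq> 0) \<and> (\<forall>c. linear (\<lambda>b. s b c))
      \<and> (\<forall>b c. s b c = s c b)"

definition qf :: "('b::real_vector \<Rightarrow> 'b \<Rightarrow> real) \<Rightarrow> 'b \<Rightarrow> real" where
  "qf s b = s b b / 2"

definition q_positive :: "('b::real_vector \<Rightarrow> 'b \<Rightarrow> real) \<Rightarrow> 'b set \<Rightarrow> bool" where
  "q_positive s A \<longleftrightarrow> A \<noteq> {} \<and> (\<forall>b\<in>A. \<forall>c\<in>A. qf s (b - c) \<ge> 0)"

text \<open>w(B,B): coarsest topology making all maps b \<mapsto> s b c continuous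
  (generated by the preimages of open sets of the reals).\<close>
definition wtop :: "('b::real_vector \<Rightarrow> 'b \<Rightarrow> real) \<Rightarrow> 'b topology" where
  "wtop s = topology_generated_by {{b. s b c \<in> U} | c U. open U}"

definition conv_w :: "('b::real_vector \<Rightarrow> 'b \<Rightarrow> real) \<Rightarrow> 'b set \<Rightarrow> 'b set" where
  "conv_w s A = (wtop s) closure_of (convex hull A)"

definition Phi :: "('b::real_vector \<Rightarrow> 'b \<Rightarrow> real) \<Rightarrow> 'b set \<Rightarrow> 'b \<Rightarrow> ereal" where
  "Phi s A x = (SUP a\<in>A. ereal (s x a - qf s a))"

definition Phi_at :: "('b::real_vector \<Rightarrow> 'b \<Rightarrow> real) \<Rightarrow> 'b set \<Rightarrow> 'b \<Rightarrow> ereal" where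
  "Phi_at s A b = (SUP c. ereal (s c b) - Phi s A c)"

definition dom_fun :: "('b \<Rightarrow> ereal) \<Rightarrow> 'b set" where
  "dom_fun g = {x. g x < \<infinity>}"

end

theory Submission
  imports Defs
begin

text \<open>If \<open>b = \<Sum> u\<^sub>a a\<close> is a convex combination of points of \<open>A\<close>, then
  \<open>\<lfloor>c, b\<rfloor> - \<Phi>\<^sub>A(c) \<le> \<Sum> u\<^sub>a q(a)\<close> for every \<open>c\<close>, so \<open>\<Phi>\<^sub>A\<^sup>@(b)\<close> is finite.
  Conversely, if \<open>b\<close> lies outside the weak closure of \<open>conv A\<close>, some basic neighbourhood
  \<open>{y. \<forall>c\<in>C. \<bar>\<lfloor>y - b, c\<rfloor>\<bar> < \<epsilon>}\<close> with \<open>C\<close> finite misses \<open>conv A\<close>. The image of \<open>conv A\<close>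
  under \<open>y \<mapsto> (\<lfloor>y - b, c\<rfloor>)\<^sub>c\<close> is a convex subset of \<open>\<real>\<^sup>C\<close> avoiding the \<open>\<epsilon>\<close>-cube around
  \<open>0\<close>; its minimal-norm point \<open>z\<close> separates it from \<open>0\<close>, and with \<open>g = \<Sum> z\<^sub>c c\<close> this gives
  \<open>\<lfloor>a, g\<rfloor> \<ge> \<lfloor>b, g\<rfloor> + \<epsilon>\<^sup>2\<close> on \<open>A\<close>. By \<open>q\<close>-positivity, \<open>\<Phi>\<^sub>A(a\<^sub>0 - \<lambda> g) \<le> q(a\<^sub>0) - \<lambda>(\<lfloor>b, g\<rfloor> + \<epsilon>\<^sup>2)\<close>
  for \<open>a\<^sub>0 \<in> A\<close>, whence \<open>\<Phi>\<^sub>A\<^sup>@(b) \<ge> \<lfloor>a\<^sub>0, b\<rfloor> - q(a\<^sub>0) + \<lambda> \<epsilon>\<^sup>2\<close> for all \<open>\<lambda> \<ge> 0\<close>.\<close>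

lemma nonneg_if_nonneg_add_small_multiples:
  fixes P Q :: real
  assumes "\<And>t. 0 < t \<Longrightarrow> t \<le> 1 \<Longrightarrow> 0 \<le> P + t * Q"
  shows "0 \<le> P"
proof (rule tendsto_lowerbound)
  have "((\<lambda>t. P + t * Q) \<longlongrightarrow> P + 0 * Q) (at_right 0)"
    by (intro tendsto_intros)
  then show "((\<lambda>t. P + t * Q) \<longlongrightarrow> P) (at_right 0)"
    by simp
  show "\<forall>\<^sub>F t in at_right 0. 0 \<le> P + t * Q"
    unfolding eventually_at_right_field using assms by (intro exI[of _ 1]) auto
qed simp

text \<open>\<open>\<real>\<^sup>C\<close> for a finite set \<open>C\<close> is modelled by functions \<open>'i \<Rightarrow> real\<close> of which only the
  values on \<open>C\<close> matter; \<open>C\<close> has no Euclidean type, so finite-dimensional separation is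
  proved directly, via a point of minimal norm.\<close>

definition sqnorm_on :: "'i set \<Rightarrow> ('i \<Rightarrow> real) \<Rightarrow> real" where
  "sqnorm_on C k = (\<Sum>i\<in>C. (k i)\<^sup>2)"

definition coord_convex :: "('i \<Rightarrow> real) set \<Rightarrow> bool" where
  "coord_convex K \<longleftrightarrow> (\<forall>k\<in>K. \<forall>l\<in>K. \<forall>t. 0 \<le> t \<longrightarrow> t \<le> 1 \<longrightarrow> (\<lambda>i. (1 - t) * k i + t * l i) \<in> K)"

lemma coord_convexD:
  "coord_convex K \<Longrightarrow> k \<in> K \<Longrightarrow> l \<in> K \<Longrightarrow> 0 \<le> t \<Longrightarrow> t \<le> 1 \<Longrightarrow> (\<lambda>i. (1 - t) * k i + t * l i) \<in> K"
  unfolding coord_convex_def by blast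

lemma sqnorm_on_nonneg: "0 \<le> sqnorm_on C k"
  unfolding sqnorm_on_def by (simp add: sum_nonneg)

lemma sqnorm_on_parallelogram:
  "sqnorm_on C (\<lambda>i. k i - l i)
     = 2 * sqnorm_on C k + 2 * sqnorm_on C l - 4 * sqnorm_on C (\<lambda>i. (1 - 1/2) * k i + 1/2 * l i)"
  unfolding sqnorm_on_def
  by (simp add: sum_distrib_left sum_subtractf[symmetric] sum.distrib[symmetric] power2_eq_square algebra_simps)

lemma sqnorm_on_convex_combination:
  "sqnorm_on C (\<lambda>i. (1 - t) * z i + t * k i)
     = sqnorm_on C z + t * (2 * (\<Sum>i\<in>C. z i * (k i - z i)) + t * sqnorm_on C (\<lambda>i. k i - z i))"
  unfolding sqnorm_on_def
  by (simp add: sum_distrib_left sum.distrib[symmetric] power2_eq_square algebra_simps)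

lemma coord_sq_le_sqnorm_on: "finite C \<Longrightarrow> i \<in> C \<Longrightarrow> (k i)\<^sup>2 \<le> sqnorm_on C k"
  unfolding sqnorm_on_def by (rule member_le_sum) auto

lemma tendsto_sqnorm_on:
  assumes "finite C" "\<And>i. i \<in> C \<Longrightarrow> ((\<lambda>m. f m i) \<longlongrightarrow> z i) F"
  shows "((\<lambda>m. sqnorm_on C (f m)) \<longlongrightarrow> sqnorm_on C z) F"
  unfolding sqnorm_on_def using assms by (intro tendsto_intros) auto

lemma Cauchy_if_dist_le_add:
  fixes f :: "nat \<Rightarrow> 'a::metric_space"
  assumes dist: "\<And>m n. dist (f m) (f n) \<le> g m + g n" and g: "g \<longlonglongrightarrow> 0"
  shows "Cauchy f"
proof (rule metric_CauchyI)
  fix r :: real assume "0 < r"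
  then obtain M where M: "\<And>n. n \<ge> M \<Longrightarrow> norm (g n) < r / 2"
    using LIMSEQ_D[OF g, of "r / 2"] by auto
  have "dist (f m) (f n) < r" if "m \<ge> M" "n \<ge> M" for m n
    using dist[of m n] M[OF that(1)] M[OF that(2)] by simp
  then show "\<exists>M. \<forall>m\<ge>M. \<forall>n\<ge>M. dist (f m) (f n) < r" by blast
qed

text \<open>The slack \<open>1/(2(m+1)\<^sup>2)\<close> makes the parallelogram law bound the coordinate
  differences of \<open>y m\<close> and \<open>y l\<close> by \<open>1/(m+1) + 1/(l+1)\<close>.\<close>

lemma minimizing_sequence_converges:
  assumes C: "finite C" and K: "coord_convex K" and yK: "\<And>m. y m \<in> K"
    and yN: "\<And>m. sqnorm_on C (y m) \<le> (INF k\<in>K. sqnorm_on C k) + (inverse (real (Suc m)))\<^sup>2 / 2"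
  obtains z where "\<And>i. i \<in> C \<Longrightarrow> (\<lambda>m. y m i) \<longlonglongrightarrow> z i"
proof -
  let ?\<delta> = "INF k\<in>K. sqnorm_on C k"
  let ?g = "\<lambda>m. inverse (real (Suc m))"
  have \<delta>: "?\<delta> \<le> sqnorm_on C k" if "k \<in> K" for k
    using that by (intro cINF_lower bdd_belowI2[of _ 0]) (auto simp: sqnorm_on_nonneg)
  have Cauchy: "Cauchy (\<lambda>m. y m i)" if i: "i \<in> C" for i
  proof (rule Cauchy_if_dist_le_add)
    show "?g \<longlonglongrightarrow> 0" by (rule LIMSEQ_inverse_real_of_nat)
    fix m l
    have mid: "(\<lambda>i. (1 - 1/2) * y m i + 1/2 * y l i) \<in> K"
      by (rule coord_convexD[OF K yK yK]) auto
    have "(y m i - y l i)\<^sup>2 \<le> sqnorm_on C (\<lambda>i. y m i - y l i)"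
      using coord_sq_le_sqnorm_on[OF C i] .
    also have "\<dots> \<le> (?g m)\<^sup>2 + (?g l)\<^sup>2"
      using sqnorm_on_parallelogram[of C "y m" "y l"] \<delta>[OF mid] yN[of m] yN[of l] by linarith
    also have "\<dots> \<le> (?g m + ?g l)\<^sup>2"
      by (simp add: power2_sum)
    finally have "\<bar>y m i - y l i\<bar> \<le> \<bar>?g m + ?g l\<bar>"
      unfolding abs_le_square_iff .
    then show "dist (y m i) (y l i) \<le> ?g m + ?g l"
      by (simp add: dist_real_def)
  qed
  show thesis
  proof
    show "(\<lambda>m. y m i) \<longlonglongrightarrow> lim (\<lambda>m. y m i)" if "i \<in> C" for i
      using Cauchy[OF that] by (simp add: Cauchy_convergent_iff convergent_LIMSEQ_iff)
  qed
qed

lemma sqnorm_on_minimizer: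
  assumes C: "finite C" and ne: "K \<noteq> {}" and K: "coord_convex K"
  obtains z where "sqnorm_on C z = (INF k\<in>K. sqnorm_on C k)"
    and "\<And>k t. k \<in> K \<Longrightarrow> 0 \<le> t \<Longrightarrow> t \<le> 1 \<Longrightarrow> sqnorm_on C z \<le> sqnorm_on C (\<lambda>i. (1 - t) * z i + t * k i)"
proof -
  let ?\<delta> = "INF k\<in>K. sqnorm_on C k"
  let ?\<eta> = "\<lambda>m. (inverse (real (Suc m)))\<^sup>2 / 2"
  have bdd: "bdd_below ((\<lambda>k. sqnorm_on C k) ` K)"
    by (rule bdd_belowI2[of _ 0]) (simp add: sqnorm_on_nonneg)
  have \<delta>: "?\<delta> \<le> sqnorm_on C k" if "k \<in> K" for k
    using bdd that by (rule cINF_lower)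
  have "\<exists>k\<in>K. sqnorm_on C k < ?\<delta> + ?\<eta> m" for m
    using bdd ne by (subst cINF_less_iff[symmetric]) auto
  then obtain y where yK: "\<And>m. y m \<in> K" and yN: "\<And>m. sqnorm_on C (y m) < ?\<delta> + ?\<eta> m"
    by metis
  obtain z where lim: "\<And>i. i \<in> C \<Longrightarrow> (\<lambda>m. y m i) \<longlonglongrightarrow> z i"
    using minimizing_sequence_converges[OF C K yK less_imp_le[OF yN]] by blast
  have "(\<lambda>m. sqnorm_on C (y m)) \<longlonglongrightarrow> sqnorm_on C z"
    using C lim by (rule tendsto_sqnorm_on)
  moreover have "(\<lambda>m. sqnorm_on C (y m)) \<longlonglongrightarrow> ?\<delta>"
  proof (rule tendsto_sandwich[of "\<lambda>_. ?\<delta>" _ _ "\<lambda>m. ?\<delta> + ?\<eta> m"])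
    have "?\<eta> \<longlonglongrightarrow> 0\<^sup>2 / 2"
      by (intro tendsto_intros LIMSEQ_inverse_real_of_nat) simp
    from tendsto_add[OF tendsto_const this]
    show "(\<lambda>m. ?\<delta> + ?\<eta> m) \<longlonglongrightarrow> ?\<delta>"
      by simp
    show "\<forall>\<^sub>F m in sequentially. ?\<delta> \<le> sqnorm_on C (y m)"
      using \<delta>[OF yK] by simp
    show "\<forall>\<^sub>F m in sequentially. sqnorm_on C (y m) \<le> ?\<delta> + ?\<eta> m"
      using less_imp_le[OF yN] by simp
  qed simp
  ultimately have z: "sqnorm_on C z = ?\<delta>"
    by (rule LIMSEQ_unique)
  have "?\<delta> \<le> sqnorm_on C (\<lambda>i. (1 - t) * z i + t * k i)" if "k \<in> K" "0 \<le> t" "t \<le> 1" for k t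
  proof (rule LIMSEQ_le_const)
    show "(\<lambda>m. sqnorm_on C (\<lambda>i. (1 - t) * y m i + t * k i))
            \<longlonglongrightarrow> sqnorm_on C (\<lambda>i. (1 - t) * z i + t * k i)"
      using C lim by (intro tendsto_sqnorm_on tendsto_intros)
    show "\<exists>N. \<forall>m\<ge>N. ?\<delta> \<le> sqnorm_on C (\<lambda>i. (1 - t) * y m i + t * k i)"
      using \<delta> coord_convexD[OF K yK that] by blast
  qed
  with z that show thesis by simp
qed

lemma sqnorm_on_le_inner_if_minimal_on_segments:
  assumes "\<And>t. 0 < t \<Longrightarrow> t \<le> 1 \<Longrightarrow> sqnorm_on C z \<le> sqnorm_on C (\<lambda>i. (1 - t) * z i + t * k i)"
  shows "sqnorm_on C z \<le> (\<Sum>i\<in>C. z i * k i)"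
proof -
  define P where "P = (\<Sum>i\<in>C. z i * (k i - z i))"
  have "0 \<le> 2 * P + t * sqnorm_on C (\<lambda>i. k i - z i)" if "0 < t" "t \<le> 1" for t
    using assms[OF that] that sqnorm_on_convex_combination[of C t z k]
    by (simp add: P_def zero_le_mult_iff)
  then have "0 \<le> 2 * P"
    by (rule nonneg_if_nonneg_add_small_multiples)
  moreover have "(\<Sum>i\<in>C. z i * k i) = P + sqnorm_on C z"
    unfolding P_def sqnorm_on_def by (simp add: sum.distrib[symmetric] power2_eq_square algebra_simps)
  ultimately show ?thesis by linarith
qed

lemma coord_convex_separation:
  assumes "finite C" and "coord_convex K" and e: "\<And>k. k \<in> K \<Longrightarrow> e \<le> sqnorm_on C k"
  obtains z where "\<And>k. k \<in> K \<Longrightarrow> e \<le> (\<Sum>i\<in>C. z i * k i)"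
proof (cases "K = {}")
  case False
  then obtain z where z: "sqnorm_on C z = (INF k\<in>K. sqnorm_on C k)"
    and min: "\<And>k t. k \<in> K \<Longrightarrow> 0 \<le> t \<Longrightarrow> t \<le> 1 \<Longrightarrow> sqnorm_on C z \<le> sqnorm_on C (\<lambda>i. (1 - t) * z i + t * k i)"
    using sqnorm_on_minimizer assms(1,2) by blast
  have "e \<le> sqnorm_on C z"
    unfolding z using False e by (intro cINF_greatest)
  also have "sqnorm_on C z \<le> (\<Sum>i\<in>C. z i * k i)" if "k \<in> K" for k
    using min[OF that] by (intro sqnorm_on_le_inner_if_minimal_on_segments) simp
  finally show thesis using that by blast
qed (use that in blast)

lemma SSD_sym: "SSD s \<Longrightarrow> s b c = s c b"
  unfolding SSD_def by blast

lemma SSD_linear_left: "SSD s \<Longrightarrow> linear (\<lambda>b. s b c)"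
  unfolding SSD_def by blast

lemma SSD_left:
  assumes "SSD s"
  shows "s (x + y) c = s x c + s y c" "s (x - y) c = s x c - s y c"
    "s (r *\<^sub>R x) c = r * s x c" "s (sum f S) c = (\<Sum>i\<in>S. s (f i) c)"
proof -
  have lin: "linear (\<lambda>b. s b c)"
    using assms by (rule SSD_linear_left)
  show "s (x + y) c = s x c + s y c" using linear_add[OF lin] .
  show "s (x - y) c = s x c - s y c" using linear_diff[OF lin] .
  show "s (r *\<^sub>R x) c = r * s x c" using linear_scale[OF lin] by simp
  show "s (sum f S) c = (\<Sum>i\<in>S. s (f i) c)" using linear_sum[OF lin] by (simp add: o_def)
qed

lemma SSD_right:
  assumes "SSD s"
  shows "s c (x + y) = s c x + s c y" "s c (x - y) = s c x - s c y"
    "s c (r *\<^sub>R x) = r * s c x" "s c (sum f S) = (\<Sum>i\<in>S. s c (f i))"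
proof -
  have sym: "\<And>x. s c x = s x c"
    using assms by (rule SSD_sym)
  show "s c (x + y) = s c x + s c y" "s c (x - y) = s c x - s c y"
    "s c (r *\<^sub>R x) = r * s c x" "s c (sum f S) = (\<Sum>i\<in>S. s c (f i))"
    unfolding sym by (simp_all add: SSD_left[OF assms])
qed

lemma qf_diff: "SSD s \<Longrightarrow> qf s (a - b) = qf s a - s a b + qf s b"
  unfolding qf_def by (simp add: SSD_left SSD_right SSD_sym[of s b a] field_simps)

lemma q_positive_pairing_le:
  assumes "SSD s" "q_positive s A" "a \<in> A" "a' \<in> A"
  shows "s a' a - qf s a \<le> qf s a'"
  using assms(2-4) qf_diff[OF assms(1), of a a'] SSD_sym[OF assms(1), of a a']
  unfolding q_positive_def by fastforce

lemma Phi_at_convex_combination_le: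
  assumes ssd: "SSD s" and S: "finite S" "S \<subseteq> A" "\<And>a. a \<in> S \<Longrightarrow> 0 \<le> u a" "sum u S = 1"
  shows "Phi_at s A (\<Sum>a\<in>S. u a *\<^sub>R a) \<le> ereal (\<Sum>a\<in>S. u a * qf s a)"
  unfolding Phi_at_def
proof (rule SUP_least)
  fix c
  define v where "v a = s c a - qf s a" for a
  define m where "m = Max (v ` S)"
  have "S \<noteq> {}" using S(4) by auto
  then have "m \<in> v ` S"
    unfolding m_def using S(1) by (intro Max_in) auto
  then obtain a' where a': "a' \<in> S" "m = v a'" by blast
  have "s c (\<Sum>a\<in>S. u a *\<^sub>R a) - (\<Sum>a\<in>S. u a * qf s a) = (\<Sum>a\<in>S. u a * v a)"
    by (simp add: SSD_right[OF ssd] v_def sum_subtractf[symmetric] algebra_simps)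
  also have "\<dots> \<le> (\<Sum>a\<in>S. u a * m)"
    using S(1,3) unfolding m_def by (intro sum_mono mult_left_mono Max_ge) auto
  also have "\<dots> = m"
    using S(4) by (simp add: sum_distrib_right[symmetric])
  also have "ereal m \<le> Phi s A c"
    unfolding Phi_def a'(2) v_def using a' S(2) by (intro SUP_upper) auto
  finally show "ereal (s c (\<Sum>a\<in>S. u a *\<^sub>R a)) - Phi s A c \<le> ereal (\<Sum>a\<in>S. u a * qf s a)"
    by (cases "Phi s A c") auto
qed

lemma convex_hull_subset_dom_Phi_at:
  assumes "SSD s"
  shows "convex hull A \<subseteq> dom_fun (Phi_at s A)"
proof
  fix b assume "b \<in> convex hull A"
  then obtain S u where "finite S" "S \<subseteq> A" "\<forall>a\<in>S. 0 \<le> u a" "sum u S = 1"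
    and b: "b = (\<Sum>a\<in>S. u a *\<^sub>R a)"
    unfolding convex_hull_explicit by blast
  then have "Phi_at s A b \<le> ereal (\<Sum>a\<in>S. u a * qf s a)"
    using Phi_at_convex_combination_le[OF assms] by blast
  then show "b \<in> dom_fun (Phi_at s A)"
    unfolding dom_fun_def by (cases "Phi_at s A b") auto
qed

definition weak_box :: "('b \<Rightarrow> 'c \<Rightarrow> real) \<Rightarrow> 'c set \<Rightarrow> real \<Rightarrow> 'b \<Rightarrow> 'b set" where
  "weak_box s C \<epsilon> x = {y. \<forall>c\<in>C. \<bar>s y c - s x c\<bar> < \<epsilon>}"

lemma topspace_wtop [simp]: "topspace (wtop s) = UNIV"
proof -
  have "UNIV \<in> {{b. s b c \<in> U} | c U. open U}" by blast
  then show ?thesis unfolding wtop_def by auto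
qed

lemma weak_box_Un_subset:
  "weak_box s (C1 \<union> C2) (min \<epsilon>1 \<epsilon>2) x \<subseteq> weak_box s C1 \<epsilon>1 x \<inter> weak_box s C2 \<epsilon>2 x"
  unfolding weak_box_def by auto

lemma openin_wtop_contains_weak_box:
  assumes "openin (wtop s) T" and "x \<in> T"
  obtains C \<epsilon> where "finite C" "0 < \<epsilon>" "weak_box s C \<epsilon> x \<subseteq> T"
proof -
  have "generate_topology_on {{b. s b c \<in> U} | c U. open U} T"
    using assms(1) unfolding wtop_def by (simp add: openin_topology_generated_by_iff)
  then have "\<forall>x\<in>T. \<exists>C \<epsilon>. finite C \<and> 0 < \<epsilon> \<and> weak_box s C \<epsilon> x \<subseteq> T"
  proof (induction rule: generate_topology_on.induct)
    case (Int T1 T2)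
    show ?case
    proof
      fix x assume x: "x \<in> T1 \<inter> T2"
      obtain C1 \<epsilon>1 where "finite C1" "0 < \<epsilon>1" "weak_box s C1 \<epsilon>1 x \<subseteq> T1"
        using Int.IH(1) x by blast
      moreover obtain C2 \<epsilon>2 where "finite C2" "0 < \<epsilon>2" "weak_box s C2 \<epsilon>2 x \<subseteq> T2"
        using Int.IH(2) x by blast
      ultimately show "\<exists>C \<epsilon>. finite C \<and> 0 < \<epsilon> \<and> weak_box s C \<epsilon> x \<subseteq> T1 \<inter> T2"
        using weak_box_Un_subset[of s C1 C2 \<epsilon>1 \<epsilon>2 x]
        by (intro exI[of _ "C1 \<union> C2"] exI[of _ "min \<epsilon>1 \<epsilon>2"]) auto
    qed
  next
    case (UN Ts)
    show ?case
    proof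
      fix x assume "x \<in> \<Union>Ts"
      then obtain T' where "T' \<in> Ts" "x \<in> T'" by blast
      then obtain C \<epsilon> where "finite C" "0 < \<epsilon>" "weak_box s C \<epsilon> x \<subseteq> T'"
        using UN.IH by blast
      with \<open>T' \<in> Ts\<close> show "\<exists>C \<epsilon>. finite C \<and> 0 < \<epsilon> \<and> weak_box s C \<epsilon> x \<subseteq> \<Union>Ts"
        by blast
    qed
  next
    case (Basis B)
    then obtain c U where B: "B = {b. s b c \<in> U}" and U: "open U" by blast
    show ?case
    proof
      fix x assume "x \<in> B"
      then obtain \<epsilon> where "0 < \<epsilon>" "ball (s x c) \<epsilon> \<subseteq> U"
        using B U openE by blast
      have "weak_box s {c} \<epsilon> x \<subseteq> B"
      proof
        fix y assume "y \<in> weak_box s {c} \<epsilon> x"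
        then have "s y c \<in> ball (s x c) \<epsilon>"
          by (simp add: weak_box_def dist_real_def abs_minus_commute)
        with \<open>ball (s x c) \<epsilon> \<subseteq> U\<close> show "y \<in> B"
          unfolding B by blast
      qed
      with \<open>0 < \<epsilon>\<close> show "\<exists>C \<epsilon>. finite C \<and> 0 < \<epsilon> \<and> weak_box s C \<epsilon> x \<subseteq> B"
        by (intro exI[of _ "{c}"] exI[of _ \<epsilon>]) simp
    qed
  qed simp
  with assms(2) that show thesis by blast
qed

lemma separation_from_conv_w:
  assumes ssd: "SSD s" and b: "b \<notin> conv_w s A"
  obtains g e where "0 < e" "\<And>x. x \<in> convex hull A \<Longrightarrow> s b g + e \<le> s x g"
proof -
  obtain T where T: "openin (wtop s) T" "b \<in> T" "T \<inter> convex hull A = {}"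
    using b unfolding conv_w_def in_closure_of by auto
  obtain C \<epsilon> where C: "finite C" "0 < \<epsilon>" and box: "weak_box s C \<epsilon> b \<subseteq> T"
    using T(1,2) by (rule openin_wtop_contains_weak_box)
  define K where "K = (\<lambda>x c. s x c - s b c) ` (convex hull A)"
  have "coord_convex K"
    unfolding coord_convex_def K_def
  proof (clarsimp)
    fix x x' and t :: real
    assume "x \<in> convex hull A" "x' \<in> convex hull A" "0 \<le> t" "t \<le> 1"
    then have "(1 - t) *\<^sub>R x + t *\<^sub>R x' \<in> convex hull A"
      by (intro convexD_alt convex_convex_hull)
    moreover have "(\<lambda>c. (1 - t) * (s x c - s b c) + t * (s x' c - s b c))
        = (\<lambda>c. s ((1 - t) *\<^sub>R x + t *\<^sub>R x') c - s b c)"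
      by (simp add: SSD_left[OF ssd] algebra_simps)
    ultimately show "(\<lambda>c. (1 - t) * (s x c - s b c) + t * (s x' c - s b c))
        \<in> (\<lambda>x c. s x c - s b c) ` (convex hull A)"
      by auto
  qed
  moreover have "\<epsilon>\<^sup>2 \<le> sqnorm_on C k" if k: "k \<in> K" for k
  proof -
    obtain x where x: "x \<in> convex hull A" "k = (\<lambda>c. s x c - s b c)"
      using k unfolding K_def by blast
    then have "x \<notin> weak_box s C \<epsilon> b" using box T(3) by blast
    then obtain c where c: "c \<in> C" "\<epsilon> \<le> \<bar>k c\<bar>"
      unfolding weak_box_def x(2) by auto
    then have "\<epsilon>\<^sup>2 \<le> (k c)\<^sup>2"
      using C(2) by (metis abs_le_square_iff abs_of_pos)
    also have "\<dots> \<le> sqnorm_on C k"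
      using C(1) c(1) by (rule coord_sq_le_sqnorm_on)
    finally show ?thesis .
  qed
  ultimately obtain z where z: "\<And>k. k \<in> K \<Longrightarrow> \<epsilon>\<^sup>2 \<le> (\<Sum>c\<in>C. z c * k c)"
    using coord_convex_separation[OF C(1)] by blast
  show thesis
  proof
    show "0 < \<epsilon>\<^sup>2" using C(2) by simp
    fix x assume "x \<in> convex hull A"
    then have "\<epsilon>\<^sup>2 \<le> (\<Sum>c\<in>C. z c * (s x c - s b c))"
      using z unfolding K_def by blast
    also have "\<dots> = s x (\<Sum>c\<in>C. z c *\<^sub>R c) - s b (\<Sum>c\<in>C. z c *\<^sub>R c)"
      by (simp add: SSD_right[OF ssd] sum_subtractf[symmetric] algebra_simps)
    finally show "s b (\<Sum>c\<in>C. z c *\<^sub>R c) + \<epsilon>\<^sup>2 \<le> s x (\<Sum>c\<in>C. z c *\<^sub>R c)" by simp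
  qed
qed

lemma Phi_at_infinite_if_separated:
  assumes ssd: "SSD s" and qp: "q_positive s A" and e: "0 < e"
    and sep: "\<And>a. a \<in> A \<Longrightarrow> s b g + e \<le> s a g"
  shows "Phi_at s A b = \<infinity>"
proof (rule ereal_top)
  fix M :: real
  obtain a0 where a0: "a0 \<in> A" using qp unfolding q_positive_def by blast
  define r where "r = max 0 ((M - s a0 b + qf s a0) / e)"
  have r_bounds: "0 \<le> r" "M \<le> s a0 b - qf s a0 + r * e"
    using e by (auto simp: r_def max_def field_simps)
  define x where "x = a0 - r *\<^sub>R g"
  have "s x a - qf s a \<le> qf s a0 - r * (s b g + e)" if "a \<in> A" for a
  proof -
    have "r * (s b g + e) \<le> r * s a g"
      using sep[OF that] r_bounds(1) by (rule mult_left_mono)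
    moreover have "s x a = s a0 a - r * s a g"
      unfolding x_def by (simp add: SSD_left[OF ssd] SSD_sym[OF ssd, of g a])
    ultimately show ?thesis
      using q_positive_pairing_le[OF ssd qp that a0] by linarith
  qed
  then have Phi: "Phi s A x \<le> ereal (qf s a0 - r * (s b g + e))"
    unfolding Phi_def by (intro SUP_least) auto
  have "s x b = s a0 b - r * s b g"
    unfolding x_def by (simp add: SSD_left[OF ssd] SSD_sym[OF ssd, of g b])
  then have "ereal M \<le> ereal (s x b) - Phi s A x"
    using Phi r_bounds(2) by (cases "Phi s A x") (auto simp: algebra_simps)
  also have "\<dots> \<le> Phi_at s A b"
    unfolding Phi_at_def by (rule SUP_upper) simp
  finally show "ereal M \<le> Phi_at s A b" .
qed

lemma dom_Phi_at_subset_conv_w: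
  assumes ssd: "SSD s" and qp: "q_positive s A"
  shows "dom_fun (Phi_at s A) \<subseteq> conv_w s A"
proof
  fix b assume "b \<in> dom_fun (Phi_at s A)"
  then have finite: "Phi_at s A b \<noteq> \<infinity>"
    unfolding dom_fun_def by simp
  show "b \<in> conv_w s A"
  proof (rule ccontr)
    assume "b \<notin> conv_w s A"
    then obtain g e where "0 < e" "\<And>x. x \<in> convex hull A \<Longrightarrow> s b g + e \<le> s x g"
      using separation_from_conv_w[OF ssd] by blast
    then have "Phi_at s A b = \<infinity>"
      using Phi_at_infinite_if_separated[OF ssd qp] hull_inc[of _ A] by metis
    with finite show False ..
  qed
qed

theorem mainTheorem9:
  fixes s :: "'b::real_vector \<Rightarrow> 'b \<Rightarrow> real" and A :: "'b set"
  assumes "SSD s" and "q_positive s A"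
  shows "convex hull A \<subseteq> dom_fun (Phi_at s A) \<and> dom_fun (Phi_at s A) \<subseteq> conv_w s A"
  using convex_hull_subset_dom_Phi_at[OF assms(1)] dom_Phi_at_subset_conv_w[OF assms] ..

end
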